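(* Let $W$ be an affine Weyl group, $w\in W$, $i\in D_R(w)$, and let $r_1,\dots,r_n$ be reflections with $H_{r_t}=H_{\alpha,c+t}$ for some root $\alpha$ and $c\in\mathbb{Z}$, such that $\ell(r_t\cdots r_1ws_i)=\ell(r_{t-1}\cdots r_1ws_i)+1$ for all $1\le t\le n$. Let $j\in D_R(r_n\cdots r_1ws_i)$. If $r_t\cdots r_1ws_i\neq r_{t-1}\cdots r_1ws_is_j$ for all $1\le t\le n$, then $j\in D_R(r_t\cdots r_1ws_i)$ for all $1\le t\le n$.
   Context: $W$ is the affine Weyl group of a crystallographic root system $\Phi$, a Coxeter group with simple generators $s_i$; $H_{\beta,k}=\{v:\langle v,\beta\rangle=k\}$ and reflections of $W$ are the reflections in these hyperplanes; $H_r$ denotes the hyperplane of the reflection $r$. $\ell$ is length and $D_R(x)=\{i:\ell(xs_i)<\ell(x)\}$ is the right descent set. *)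

theory Defs
  imports "HOL-Analysis.Analysis"
begin

definition coroot :: "'a::euclidean_space \<Rightarrow> 'a" where
  "coroot \<beta> = (2 / (\<beta> \<bullet> \<beta>)) *\<^sub>R \<beta>"

definition hyp :: "'a::euclidean_space \<Rightarrow> real \<Rightarrow> 'a set" where
  "hyp \<beta> k = {v. v \<bullet> \<beta> = k}"

definition refl :: "'a::euclidean_space \<Rightarrow> real \<Rightarrow> 'a \<Rightarrow> 'a" where
  "refl \<beta> k v = v - (v \<bullet> \<beta> - k) *\<^sub>R coroot \<beta>"

definition root_system :: "'a::euclidean_space set \<Rightarrow> bool" where
  "root_system \<Phi> \<longleftrightarrow> finite \<Phi> \<and> 0 \<notin> \<Phi> \<and> span \<Phi> = UNIV \<and>
     (\<forall>\<alpha>\<in>\<Phi>. \<forall>\<beta>\<in>\<Phi>. refl \<alpha> 0 \<beta> \<in> \<Phi>) \<and>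
     (\<forall>\<alpha>\<in>\<Phi>. \<forall>\<beta>\<in>\<Phi>. 2 * (\<alpha> \<bullet> \<beta>) / (\<alpha> \<bullet> \<alpha>) \<in> \<int>) \<and>
     (\<forall>\<alpha>\<in>\<Phi>. \<forall>c. c *\<^sub>R \<alpha> \<in> \<Phi> \<longrightarrow> c = 1 \<or> c = -1)"

definition hyps :: "'a::euclidean_space set \<Rightarrow> 'a set set" where
  "hyps \<Phi> = {hyp \<beta> (of_int k) | \<beta> k. \<beta> \<in> \<Phi>}"

definition affrefls :: "'a::euclidean_space set \<Rightarrow> ('a \<Rightarrow> 'a) set" where
  "affrefls \<Phi> = {refl \<beta> (of_int k) | \<beta> k. \<beta> \<in> \<Phi>}"

definition fixH :: "('a \<Rightarrow> 'a) \<Rightarrow> 'a set" where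
  "fixH r = {v. r v = v}"

inductive_set affW :: "'a::euclidean_space set \<Rightarrow> ('a \<Rightarrow> 'a) set" for \<Phi> where
  id_in: "id \<in> affW \<Phi>"
| step: "r \<in> affrefls \<Phi> \<Longrightarrow> w \<in> affW \<Phi> \<Longrightarrow> r \<circ> w \<in> affW \<Phi>"

definition regular :: "'a::euclidean_space set \<Rightarrow> 'a \<Rightarrow> bool" where
  "regular \<Phi> \<xi> \<longleftrightarrow> (\<forall>\<alpha>\<in>\<Phi>. \<alpha> \<bullet> \<xi> \<noteq> 0)"

definition posroots :: "'a::euclidean_space set \<Rightarrow> 'a \<Rightarrow> 'a set" where
  "posroots \<Phi> \<xi> = {\<alpha>\<in>\<Phi>. \<alpha> \<bullet> \<xi> > 0}"

definition alcove0 :: "'a::euclidean_space set \<Rightarrow> 'a \<Rightarrow> 'a set" where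
  "alcove0 \<Phi> \<xi> = {v. \<forall>\<alpha>\<in>posroots \<Phi> \<xi>. 0 < v \<bullet> \<alpha> \<and> v \<bullet> \<alpha> < 1}"

definition wall :: "'a::euclidean_space set \<Rightarrow> 'a \<Rightarrow> 'a set \<Rightarrow> bool" where
  "wall \<Phi> \<xi> H \<longleftrightarrow> H \<in> hyps \<Phi> \<and>
     (\<exists>p \<in> closure (alcove0 \<Phi> \<xi>) \<inter> H. \<forall>H' \<in> hyps \<Phi>. p \<in> H' \<longrightarrow> H' = H)"

definition simples :: "'a::euclidean_space set \<Rightarrow> 'a \<Rightarrow> ('a \<Rightarrow> 'a) set" where
  "simples \<Phi> \<xi> = {refl \<beta> (of_int k) | \<beta> k. \<beta> \<in> \<Phi> \<and> wall \<Phi> \<xi> (hyp \<beta> (of_int k))}"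

definition len :: "'a::euclidean_space set \<Rightarrow> 'a \<Rightarrow> ('a \<Rightarrow> 'a) \<Rightarrow> nat" where
  "len \<Phi> \<xi> w = (LEAST n. \<exists>xs. length xs = n \<and> set xs \<subseteq> simples \<Phi> \<xi> \<and> foldr (\<circ>) xs id = w)"

text \<open>Right descent set (indexed by the simple reflections themselves).\<close>
definition DR :: "'a::euclidean_space set \<Rightarrow> 'a \<Rightarrow> ('a \<Rightarrow> 'a) \<Rightarrow> ('a \<Rightarrow> 'a) set" where
  "DR \<Phi> \<xi> x = {s \<in> simples \<Phi> \<xi>. len \<Phi> \<xi> (x \<circ> s) < len \<Phi> \<xi> x}"

primrec rprod :: "(nat \<Rightarrow> 'a \<Rightarrow> 'a) \<Rightarrow> nat \<Rightarrow> 'a \<Rightarrow> 'a" where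
  "rprod r 0 = id"
| "rprod r (Suc t) = r (Suc t) \<circ> rprod r t"

end

theory Submission
  imports Defs
begin

text \<open>
  An affine root \<open>L = (\<beta>, k) \<in> \<Phi> \<times> \<int>\<close> is an oriented hyperplane \<open>H\<^sub>\<beta>\<^sub>,\<^sub>k\<close>. For
  \<open>w \<in> W\<close> let \<open>N(w)\<close> be the set of affine roots whose sign on the fundamental alcove \<open>C\<close>
  differs from their sign on \<open>w C\<close>. Three facts about \<open>N\<close> carry the argument:
  (i) if \<open>s\<close> is simple and \<open>r\<^sub>M w = w s\<close>, then \<open>N(w s)\<close> is \<open>N(w)\<close> with the pair \<open>\<plusminus>M\<close>
  toggled, because near a wall of \<open>C\<close> the reflection \<open>s\<close> crosses no other hyperplane;
  (ii) if \<open>K \<in> N(y)\<close>, then \<open>|N(r\<^sub>K y)| + 2 \<le> |N(y)|\<close>;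
  (iii) every \<open>w \<noteq> 1\<close> has a wall of \<open>C\<close> in \<open>N(w)\<close>, hence the simple reflections generate
  \<open>W\<close>, and with the deletion property \<open>|N(w)| = 2 len w\<close>.

  Now let \<open>len (r\<^sub>K x) = len x + 1\<close>, \<open>s \<in> D\<^sub>R(r\<^sub>K x)\<close> and \<open>r\<^sub>K x \<noteq> x s\<close>. If \<open>s \<notin> D\<^sub>R(x)\<close>,
  then \<open>K \<notin> N(x)\<close> by (ii), and \<open>len (r\<^sub>K x s) < len (r\<^sub>K x) = len (x s)\<close> forces
  \<open>K \<in> N(x s)\<close>, again by (ii). By (i) \<open>K = \<plusminus>M\<close>, so \<open>r\<^sub>K x = r\<^sub>M x = x s\<close>, a
  contradiction. Applying this to \<open>x = r\<^sub>t \<cdots> r\<^sub>1 w s\<^sub>i\<close> for \<open>t = n - 1, \<dots>, 1\<close> proves the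
  theorem.
\<close>

section \<open>Affine roots\<close>

definition aval :: "'a::euclidean_space \<times> real \<Rightarrow> 'a \<Rightarrow> real" where
  "aval L v = v \<bullet> fst L - snd L"

definition arefl :: "'a::euclidean_space \<times> real \<Rightarrow> 'a \<Rightarrow> 'a" where
  "arefl L = refl (fst L) (snd L)"

definition aneg :: "'a::euclidean_space \<times> real \<Rightarrow> 'a \<times> real" where
  "aneg L = (- fst L, - snd L)"

text \<open>The affine root of \<open>aval L \<circ> arefl M\<close>.\<close>
definition aact :: "'a::euclidean_space \<times> real \<Rightarrow> 'a \<times> real \<Rightarrow> 'a \<times> real" where
  "aact M L = (refl (fst M) 0 (fst L), snd L - snd M * (fst L \<bullet> coroot (fst M)))"

lemma arefl_apply: "arefl L v = v - aval L v *\<^sub>R coroot (fst L)"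
  by (simp add: arefl_def refl_def aval_def)

lemma inner_coroot_self: "b \<noteq> 0 \<Longrightarrow> b \<bullet> coroot b = 2"
  by (simp add: coroot_def inner_commute)

lemma coroot_uminus: "coroot (- b) = - coroot b"
  by (simp add: coroot_def)

lemma aval_arefl: "aval L (arefl M v) = aval L v - (fst L \<bullet> coroot (fst M)) * aval M v"
  by (simp add: arefl_apply aval_def inner_diff_left algebra_simps inner_commute)

lemma aval_arefl_aact: "aval L (arefl M v) = aval (aact M L) v"
proof -
  obtain a j where M: "M = (a, j)" by force
  obtain b k where L: "L = (b, k)" by force
  show ?thesis
    unfolding M L aval_arefl
    by (simp add: aval_def aact_def refl_def coroot_def inner_diff_right inner_diff_left
        algebra_simps inner_commute diff_divide_distrib)
qed

lemma aval_arefl_self: "fst M \<noteq> 0 \<Longrightarrow> aval M (arefl M v) = - aval M v"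
  by (simp add: aval_arefl inner_coroot_self)

lemma arefl_arefl: "fst M \<noteq> 0 \<Longrightarrow> arefl M (arefl M v) = v"
  by (simp add: arefl_apply[of M "arefl M v"] aval_arefl_self) (simp add: arefl_apply)

lemma aval_aneg: "aval (aneg L) v = - aval L v"
  by (simp add: aval_def aneg_def)

lemma aneg_aneg: "aneg (aneg L) = L"
  by (simp add: aneg_def)

lemma arefl_aneg: "arefl (aneg L) = arefl L"
  by (rule ext) (simp add: arefl_apply aval_def aneg_def coroot_uminus algebra_simps)

lemma aval_inject:
  assumes h: "\<And>v. aval L v = aval L' v"
  shows "L = L'"
proof -
  have k: "snd L = snd L'" using h[of 0] by (simp add: aval_def)
  have "\<And>v. v \<bullet> (fst L - fst L') = 0" using h k by (simp add: aval_def inner_diff_right)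
  from this[of "fst L - fst L'"] have "fst L = fst L'" by simp
  with k show ?thesis by (simp add: prod_eq_iff)
qed

abbreviation ahyp :: "'a::euclidean_space \<times> real \<Rightarrow> 'a set" where
  "ahyp L \<equiv> hyp (fst L) (snd L)"

lemma aval_eq_0_iff: "aval L q = 0 \<longleftrightarrow> q \<in> ahyp L"
  by (simp add: aval_def hyp_def)

lemma ahyp_aneg: "ahyp (aneg L) = ahyp L"
  by (auto simp: hyp_def aneg_def)

lemma refl0_scaleR: "refl a 0 (t *\<^sub>R x) = t *\<^sub>R refl a 0 x"
  by (simp add: refl_def algebra_simps)

lemma inner_refl0_self: "a \<noteq> 0 \<Longrightarrow> refl a 0 x \<bullet> refl a 0 x = x \<bullet> x"
  by (simp add: refl_def coroot_def inner_diff_left inner_diff_right algebra_simps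
      inner_commute power2_eq_square)

lemma coroot_refl0: "a \<noteq> 0 \<Longrightarrow> coroot (refl a 0 b) = refl a 0 (coroot b)"
  by (simp add: coroot_def inner_refl0_self refl0_scaleR)

lemma dist_refl: "a \<noteq> 0 \<Longrightarrow> dist (refl a k x) (refl a k y) = dist x y"
proof -
  assume a: "a \<noteq> 0"
  have "refl a k x - refl a k y = refl a 0 (x - y)"
    by (simp add: refl_def inner_diff_left algebra_simps)
  then show ?thesis using inner_refl0_self[OF a, of "x - y"]
    by (simp add: dist_norm norm_eq_sqrt_inner)
qed

lemma arefl_conj:
  assumes "fst M \<noteq> 0"
  shows "arefl M (arefl L (arefl M v)) = arefl (aact M L) v"
proof -
  have aff: "arefl M (u - t *\<^sub>R b) = arefl M u - t *\<^sub>R refl (fst M) 0 b" for u t b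
    by (simp add: arefl_def refl_def inner_diff_left algebra_simps)
  have "arefl M (arefl L (arefl M v)) = arefl M (arefl M v - aval L (arefl M v) *\<^sub>R coroot (fst L))"
    by (simp add: arefl_apply[of L])
  also have "\<dots> = v - aval (aact M L) v *\<^sub>R refl (fst M) 0 (coroot (fst L))"
    by (simp add: aff arefl_arefl assms aval_arefl_aact)
  also have "\<dots> = arefl (aact M L) v"
    unfolding arefl_apply[of "aact M L" v] by (simp add: aact_def coroot_refl0 assms)
  finally show ?thesis .
qed

lemma aact_aact: "fst M \<noteq> 0 \<Longrightarrow> aact M (aact M L) = L"
  by (rule aval_inject) (metis aval_arefl_aact arefl_arefl)

section \<open>The affine Weyl group acting on affine roots\<close>

definition aroots :: "'a::euclidean_space set \<Rightarrow> ('a \<times> real) set" where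
  "aroots \<Phi> = \<Phi> \<times> (\<int> :: real set)"

text \<open>The affine root of \<open>aval L \<circ> w\<close>; it exists for \<open>w \<in> W\<close> (\<open>apull_aroots_aval\<close>),
  otherwise \<open>THE\<close> yields an unspecified value.\<close>
definition apull :: "('a::euclidean_space \<Rightarrow> 'a) \<Rightarrow> 'a \<times> real \<Rightarrow> 'a \<times> real" where
  "apull w L = (THE L'. \<forall>v. aval L (w v) = aval L' v)"

lemma apull_eqI: "(\<And>v. aval L (w v) = aval L' v) \<Longrightarrow> apull w L = L'"
  unfolding apull_def by (rule the_equality) (auto intro: aval_inject)

lemma apull_arefl: "apull (arefl M) L = aact M L"
  by (rule apull_eqI) (simp add: aval_arefl_aact)

lemma apull_id: "apull (\<lambda>x. x) L = L"
  by (rule apull_eqI) simp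

locale root_sys =
  fixes \<Phi> :: "'a::euclidean_space set"
  assumes root_system: "root_system \<Phi>"
begin

lemma finite_roots: "finite \<Phi>"
  using root_system by (simp add: root_system_def)

lemma root_nonzero: "\<beta> \<in> \<Phi> \<Longrightarrow> \<beta> \<noteq> 0"
  using root_system by (auto simp: root_system_def)

lemma root_refl: "\<alpha> \<in> \<Phi> \<Longrightarrow> \<beta> \<in> \<Phi> \<Longrightarrow> refl \<alpha> 0 \<beta> \<in> \<Phi>"
  using root_system by (auto simp: root_system_def)

lemma root_uminus: "\<beta> \<in> \<Phi> \<Longrightarrow> - \<beta> \<in> \<Phi>"
proof -
  assume b: "\<beta> \<in> \<Phi>"
  have "refl \<beta> 0 \<beta> = - \<beta>"
    using root_nonzero[OF b] by (simp add: refl_def coroot_def algebra_simps scaleR_2)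
  then show ?thesis using root_refl[OF b b] by simp
qed

lemma inner_coroot_Ints: "\<alpha> \<in> \<Phi> \<Longrightarrow> \<beta> \<in> \<Phi> \<Longrightarrow> \<beta> \<bullet> coroot \<alpha> \<in> \<int>"
  using root_system by (auto simp: root_system_def coroot_def inner_commute)

lemma root_reduced: "\<alpha> \<in> \<Phi> \<Longrightarrow> c *\<^sub>R \<alpha> \<in> \<Phi> \<Longrightarrow> c = 1 \<or> c = -1"
  using root_system by (auto simp: root_system_def)

lemma aroot_nonzero: "L \<in> aroots \<Phi> \<Longrightarrow> fst L \<noteq> 0"
  by (auto simp: aroots_def root_nonzero)

lemma aneg_aroots: "L \<in> aroots \<Phi> \<Longrightarrow> aneg L \<in> aroots \<Phi>"
  by (auto simp: aroots_def aneg_def root_uminus)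

lemma aact_aroots: "M \<in> aroots \<Phi> \<Longrightarrow> L \<in> aroots \<Phi> \<Longrightarrow> aact M L \<in> aroots \<Phi>"
  by (auto simp: aroots_def aact_def root_refl inner_coroot_Ints)

lemma aneg_neq: "L \<in> aroots \<Phi> \<Longrightarrow> aneg L \<noteq> L"
proof
  assume "L \<in> aroots \<Phi>" "aneg L = L"
  then have "fst L \<noteq> 0" "- fst L = fst L"
    using aroot_nonzero by (auto simp: aneg_def prod_eq_iff)
  then have "fst L \<noteq> 0" "fst L + fst L = 0"
    by (metis add.left_inverse)+
  then show False by (simp add: scaleR_2[symmetric])
qed

lemma affrefls_eq: "affrefls \<Phi> = arefl ` aroots \<Phi>"
  by (force simp: affrefls_def aroots_def arefl_def elim!: Ints_cases)

lemma arefl_affW: "L \<in> aroots \<Phi> \<Longrightarrow> arefl L \<in> affW \<Phi>"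
  using affW.step[OF _ affW.id_in, of "arefl L"] by (simp add: affrefls_eq)

lemma affW_comp: "w1 \<in> affW \<Phi> \<Longrightarrow> w2 \<in> affW \<Phi> \<Longrightarrow> w1 \<circ> w2 \<in> affW \<Phi>"
  by (induction w1 rule: affW.induct) (auto simp: comp_assoc intro: affW.step)

lemma affW_induct [consumes 1, case_names id arefl]:
  assumes "w \<in> affW \<Phi>" "P id"
    and "\<And>M w. M \<in> aroots \<Phi> \<Longrightarrow> w \<in> affW \<Phi> \<Longrightarrow> P w \<Longrightarrow> P (arefl M \<circ> w)"
  shows "P w"
  using assms by (induction w rule: affW.induct) (auto simp: affrefls_eq)

lemma apull_aroots_aval:
  assumes "w \<in> affW \<Phi>" "L \<in> aroots \<Phi>"
  shows "apull w L \<in> aroots \<Phi> \<and> aval L (w v) = aval (apull w L) v"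
proof -
  have "\<exists>L'\<in>aroots \<Phi>. \<forall>v. aval L (w v) = aval L' v"
    using assms
  proof (induction arbitrary: L rule: affW_induct)
    case (arefl M w)
    then obtain L' where "L' \<in> aroots \<Phi>" "\<forall>v. aval (aact M L) (w v) = aval L' v"
      using aact_aroots by blast
    then show ?case by (auto simp: aval_arefl_aact)
  qed auto
  then show ?thesis using apull_eqI by metis
qed

lemma apull_aroots: "w \<in> affW \<Phi> \<Longrightarrow> L \<in> aroots \<Phi> \<Longrightarrow> apull w L \<in> aroots \<Phi>"
  using apull_aroots_aval by blast

lemma aval_apull: "w \<in> affW \<Phi> \<Longrightarrow> L \<in> aroots \<Phi> \<Longrightarrow> aval L (w v) = aval (apull w L) v"
  using apull_aroots_aval by blast

lemma apull_comp:
  "w1 \<in> affW \<Phi> \<Longrightarrow> w2 \<in> affW \<Phi> \<Longrightarrow> L \<in> aroots \<Phi> \<Longrightarrow> apull (w1 \<circ> w2) L = apull w2 (apull w1 L)"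
  by (rule apull_eqI) (simp add: aval_apull apull_aroots)

lemma apull_aneg: "w \<in> affW \<Phi> \<Longrightarrow> L \<in> aroots \<Phi> \<Longrightarrow> apull w (aneg L) = aneg (apull w L)"
  by (rule apull_eqI) (simp add: aval_apull aval_aneg)

lemma bij_betw_aact: "M \<in> aroots \<Phi> \<Longrightarrow> bij_betw (aact M) (aroots \<Phi>) (aroots \<Phi>)"
  by (rule bij_betw_byWitness[where f'="aact M"]) (auto simp: aact_aact aroot_nonzero aact_aroots)

lemma bij_betw_apull: "w \<in> affW \<Phi> \<Longrightarrow> bij_betw (apull w) (aroots \<Phi>) (aroots \<Phi>)"
proof (induction rule: affW_induct)
  case id
  then show ?case by (simp add: apull_id bij_betw_def)
next
  case (arefl M w)
  have "apull (arefl M \<circ> w) L = (apull w \<circ> aact M) L" if "L \<in> aroots \<Phi>" for L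
    using apull_comp[OF arefl_affW[OF arefl.hyps(1)] arefl.hyps(2) that] by (simp add: apull_arefl)
  then show ?case
    using bij_betw_trans[OF bij_betw_aact[OF arefl.hyps(1)] arefl.IH] bij_betw_cong by metis
qed

lemma arefl_comp_commute:
  "w \<in> affW \<Phi> \<Longrightarrow> L \<in> aroots \<Phi> \<Longrightarrow> arefl L \<circ> w = w \<circ> arefl (apull w L)"
proof (induction arbitrary: L rule: affW_induct)
  case id
  then show ?case by (simp add: apull_id)
next
  case (arefl M w)
  have M: "fst M \<noteq> 0" using aroot_nonzero[OF arefl.hyps(1)] .
  have "arefl L \<circ> (arefl M \<circ> w) = arefl M \<circ> (arefl (aact M L) \<circ> w)"
    using arefl_conj[OF M, of L] arefl_arefl[OF M] by (metis comp_apply ext)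
  also have "\<dots> = arefl M \<circ> (w \<circ> arefl (apull w (aact M L)))"
    using arefl.IH aact_aroots arefl.hyps(1) arefl.prems by metis
  also have "apull w (aact M L) = apull (arefl M \<circ> w) L"
    using apull_comp[OF arefl_affW[OF arefl.hyps(1)] arefl.hyps(2) arefl.prems]
    by (simp add: apull_arefl)
  finally show ?case by (simp only: comp_assoc)
qed

end

section \<open>Separating affine roots\<close>

context root_sys
begin

definition sep :: "'a \<Rightarrow> 'a \<Rightarrow> ('a \<times> real) set" where
  "sep p q = {L \<in> aroots \<Phi>. aval L p * aval L q < 0}"

lemma sep_subset: "sep p q \<subseteq> aroots \<Phi>"
  by (auto simp: sep_def)

lemma sep_commute: "sep p q = sep q p"
  by (auto simp: sep_def mult.commute)

lemma aneg_sep: "L \<in> sep p q \<Longrightarrow> aneg L \<in> sep p q"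
  by (auto simp: sep_def aval_aneg aneg_aroots)

lemma finite_aroots_bounded: "finite {L \<in> aroots \<Phi>. \<bar>snd L\<bar> \<le> R (fst L)}"
proof (rule finite_subset)
  show "{L \<in> aroots \<Phi>. \<bar>snd L\<bar> \<le> R (fst L)} \<subseteq>
        (\<Union>\<beta>\<in>\<Phi>. {\<beta>} \<times> (real_of_int ` {-\<lceil>R \<beta>\<rceil>..\<lceil>R \<beta>\<rceil>}))"
  proof (clarify)
    fix \<beta> k assume "(\<beta>, k) \<in> aroots \<Phi>" and k: "\<bar>snd (\<beta>, k)\<bar> \<le> R (fst (\<beta>, k))"
    then obtain i where "\<beta> \<in> \<Phi>" "k = of_int i" by (auto simp: aroots_def elim: Ints_cases)
    moreover have "i \<in> {-\<lceil>R \<beta>\<rceil>..\<lceil>R \<beta>\<rceil>}"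
      using k \<open>k = of_int i\<close> le_of_int_ceiling[of "R \<beta>"] by simp linarith
    ultimately show "(\<beta>, k) \<in> (\<Union>\<beta>\<in>\<Phi>. {\<beta>} \<times> (real_of_int ` {-\<lceil>R \<beta>\<rceil>..\<lceil>R \<beta>\<rceil>}))"
      by blast
  qed
qed (simp add: finite_roots)

lemma finite_sep: "finite (sep p q)"
proof (rule finite_subset[OF _ finite_aroots_bounded])
  show "sep p q \<subseteq> {L \<in> aroots \<Phi>. \<bar>snd L\<bar> \<le> \<bar>p \<bullet> fst L\<bar> + \<bar>q \<bullet> fst L\<bar>}"
    by (auto simp: sep_def aval_def mult_less_0_iff)
qed

lemma sep_eq_if_same_signs:
  assumes "\<And>L. L \<in> aroots \<Phi> \<Longrightarrow> aval L p * aval L p' > 0"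
    and "\<And>L. L \<in> aroots \<Phi> \<Longrightarrow> aval L q * aval L q' > 0"
  shows "sep p q = sep p' q'"
  using assms by (fastforce simp: sep_def zero_less_mult_iff mult_less_0_iff)

lemma sep_arefl:
  assumes K: "K \<in> aroots \<Phi>"
  shows "sep (arefl K p) (arefl K q) = aact K ` sep p q"
proof (rule set_eqI)
  fix L
  have K0: "fst K \<noteq> 0" using aroot_nonzero[OF K] .
  have "L \<in> aroots \<Phi> \<longleftrightarrow> aact K L \<in> aroots \<Phi>"
    using aact_aroots[OF K] aact_aact[OF K0] by metis
  then have "L \<in> sep (arefl K p) (arefl K q) \<longleftrightarrow> aact K L \<in> sep p q"
    by (simp add: sep_def aval_arefl_aact)
  also have "\<dots> \<longleftrightarrow> L \<in> aact K ` sep p q"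
    using aact_aact[OF K0] by (metis image_iff)
  finally show "L \<in> sep (arefl K p) (arefl K q) \<longleftrightarrow> L \<in> aact K ` sep p q" .
qed

end

section \<open>The fundamental alcove and inversion sets\<close>

lemma mult_pos_if_in_unit_interval:
  fixes x y m a :: real
  assumes "m \<in> \<int>" "a \<in> \<int>" "a < x" "x < a + 1" "a < y" "y < a + 1"
  shows "(x - m) * (y - m) > 0"
proof -
  obtain i j where "m = of_int i" "a = of_int j" using assms(1,2) by (auto elim!: Ints_cases)
  then have "m \<le> a \<or> m \<ge> a + 1" by (cases "i \<le> j") auto
  then show ?thesis using assms(3-) by (auto intro: mult_pos_pos mult_neg_neg)
qed

locale affine_weyl = root_sys +
  fixes \<xi> :: 'a
  assumes regular: "regular \<Phi> \<xi>"
begin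

abbreviation C where "C \<equiv> alcove0 \<Phi> \<xi>"

lemma alcove_inner_root:
  assumes "c \<in> C" "\<beta> \<in> \<Phi>"
  shows "if 0 < \<beta> \<bullet> \<xi> then 0 < c \<bullet> \<beta> \<and> c \<bullet> \<beta> < 1 else -1 < c \<bullet> \<beta> \<and> c \<bullet> \<beta> < 0"
proof (cases "0 < \<beta> \<bullet> \<xi>")
  case True
  then show ?thesis using assms by (auto simp: alcove0_def posroots_def)
next
  case False
  then have "- \<beta> \<in> posroots \<Phi> \<xi>"
    using regular assms(2) root_uminus by (force simp: regular_def posroots_def)
  then show ?thesis using assms(1) False by (auto simp: alcove0_def)
qed

lemma aval_alcove_same_sign:
  assumes "c \<in> C" "c' \<in> C" "L \<in> aroots \<Phi>"
  shows "aval L c * aval L c' > 0"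
proof -
  obtain \<beta> k where L: "L = (\<beta>, k)" "\<beta> \<in> \<Phi>" "k \<in> \<int>" using assms(3) by (auto simp: aroots_def)
  define a :: real where "a = (if 0 < \<beta> \<bullet> \<xi> then 0 else -1)"
  have "a \<in> \<int>" "a < c \<bullet> \<beta>" "c \<bullet> \<beta> < a + 1" "a < c' \<bullet> \<beta>" "c' \<bullet> \<beta> < a + 1"
    using alcove_inner_root[OF assms(1) L(2)] alcove_inner_root[OF assms(2) L(2)]
    by (auto simp: a_def split: if_splits)
  then show ?thesis
    using mult_pos_if_in_unit_interval[OF L(3)] L(1) by (simp add: aval_def)
qed

lemma aval_alcove_nonzero: "c \<in> C \<Longrightarrow> L \<in> aroots \<Phi> \<Longrightarrow> aval L c \<noteq> 0"
  using aval_alcove_same_sign[of c c L] by auto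

lemma alcoveI:
  assumes "c \<in> C" and "\<forall>L\<in>aroots \<Phi>. aval L v * aval L c > 0"
  shows "v \<in> C"
  unfolding alcove0_def
proof (intro CollectI ballI conjI)
  fix \<alpha> assume a: "\<alpha> \<in> posroots \<Phi> \<xi>"
  then have "(\<alpha>, 0) \<in> aroots \<Phi>" "(\<alpha>, 1) \<in> aroots \<Phi>" by (auto simp: aroots_def posroots_def)
  then have "(v \<bullet> \<alpha>) * (c \<bullet> \<alpha>) > 0" "(v \<bullet> \<alpha> - 1) * (c \<bullet> \<alpha> - 1) > 0"
    using assms(2) by (auto simp: aval_def)
  moreover have "0 < c \<bullet> \<alpha>" "c \<bullet> \<alpha> < 1" using assms(1) a by (auto simp: alcove0_def)
  ultimately show "0 < v \<bullet> \<alpha>" "v \<bullet> \<alpha> < 1" by (auto simp: zero_less_mult_iff)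
qed

lemma open_alcove: "open C"
proof -
  have "C = (\<Inter>\<alpha>\<in>posroots \<Phi> \<xi>. {v. \<alpha> \<bullet> v > 0} \<inter> {v. \<alpha> \<bullet> v < 1})"
    by (auto simp: alcove0_def inner_commute)
  moreover have "finite (posroots \<Phi> \<xi>)" using finite_roots by (simp add: posroots_def)
  ultimately show ?thesis
    by (auto intro!: open_INT open_Int open_halfspace_lt open_halfspace_gt)
qed

lemma alcove_nonempty: "C \<noteq> {}"
proof -
  define S where "S = (\<Sum>\<alpha>\<in>\<Phi>. \<bar>\<alpha> \<bullet> \<xi>\<bar>)"
  have S0: "S \<ge> 0" unfolding S_def by (simp add: sum_nonneg)
  have "(1 / (1 + S)) *\<^sub>R \<xi> \<in> C"
    unfolding alcove0_def
  proof (intro CollectI ballI conjI)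
    fix \<alpha> assume "\<alpha> \<in> posroots \<Phi> \<xi>"
    then have "\<alpha> \<in> \<Phi>" and pos: "\<alpha> \<bullet> \<xi> > 0" by (auto simp: posroots_def)
    then have "\<alpha> \<bullet> \<xi> \<le> S"
      unfolding S_def using member_le_sum[of \<alpha> \<Phi> "\<lambda>\<alpha>. \<bar>\<alpha> \<bullet> \<xi>\<bar>"] finite_roots by auto
    then show "0 < (1 / (1 + S)) *\<^sub>R \<xi> \<bullet> \<alpha>" "(1 / (1 + S)) *\<^sub>R \<xi> \<bullet> \<alpha> < 1"
      using pos S0 by (simp_all add: inner_commute divide_less_eq)
  qed
  then show ?thesis by blast
qed

definition c0 :: 'a where
  "c0 = (SOME c. c \<in> C)"

lemma c0_alcove: "c0 \<in> C"
  unfolding c0_def using alcove_nonempty by (simp add: some_in_eq)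

text \<open>Each separating hyperplane is counted twice, once for each orientation.\<close>
definition invs :: "('a \<Rightarrow> 'a) \<Rightarrow> ('a \<times> real) set" where
  "invs w = sep c0 (w c0)"

lemma invs_subset: "invs w \<subseteq> aroots \<Phi>"
  by (simp add: invs_def sep_subset)

lemma finite_invs: "finite (invs w)"
  by (simp add: invs_def finite_sep)

lemma aneg_invs: "L \<in> invs w \<Longrightarrow> aneg L \<in> invs w"
  by (simp add: invs_def aneg_sep)

lemma aval_orbit_nonzero: "w \<in> affW \<Phi> \<Longrightarrow> c \<in> C \<Longrightarrow> L \<in> aroots \<Phi> \<Longrightarrow> aval L (w c) \<noteq> 0"
  using aval_apull aval_alcove_nonzero apull_aroots by metis

lemma invs_eq_sep:
  assumes "w \<in> affW \<Phi>" "c \<in> C"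
  shows "invs w = sep c (w c)"
  unfolding invs_def
proof (rule sep_eq_if_same_signs)
  fix L assume L: "L \<in> aroots \<Phi>"
  show "aval L c0 * aval L c > 0" using aval_alcove_same_sign[OF c0_alcove assms(2) L] .
  show "aval L (w c0) * aval L (w c) > 0"
    using aval_alcove_same_sign[OF c0_alcove assms(2) apull_aroots[OF assms(1) L]]
    by (simp add: aval_apull[OF assms(1) L])
qed

lemma invs_id: "invs (\<lambda>x. x) = {}"
  using aval_alcove_nonzero[OF c0_alcove] by (auto simp: invs_def sep_def not_less)

end

section \<open>Walls of the fundamental alcove\<close>

lemma hyps_eq: "hyps \<Phi> = ahyp ` aroots \<Phi>"
  by (force simp: hyps_def aroots_def elim!: Ints_cases)

lemma simples_eq: "simples \<Phi> \<xi> = arefl ` {L \<in> aroots \<Phi>. wall \<Phi> \<xi> (ahyp L)}"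
  by (force simp: simples_def aroots_def arefl_def elim!: Ints_cases)

lemma mult_pos_if_close:
  fixes x y :: real
  assumes "\<bar>x - y\<bar> < \<bar>y\<bar>"
  shows "x * y > 0"
  using assms by (auto simp: zero_less_mult_iff abs_if split: if_splits)

context root_sys
begin

lemma ahyp_eq_imp:
  assumes L: "L \<in> aroots \<Phi>" and L': "L' \<in> aroots \<Phi>" and e: "ahyp L = ahyp L'"
  shows "L' = L \<or> L' = aneg L"
proof -
  obtain \<beta> k \<beta>' k' where Lk: "L = (\<beta>, k)" "L' = (\<beta>', k')" by force
  have b: "\<beta> \<in> \<Phi>" "\<beta>' \<in> \<Phi>" using L L' Lk by (auto simp: aroots_def)
  have bb: "\<beta> \<bullet> \<beta> \<noteq> 0" using root_nonzero[OF b(1)] by simp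
  define q0 where "q0 = (k / (\<beta> \<bullet> \<beta>)) *\<^sub>R \<beta>"
  have q0: "q0 \<in> hyp \<beta> k" using bb by (simp add: q0_def hyp_def)
  then have q0': "q0 \<bullet> \<beta>' = k'" using e Lk by (auto simp: hyp_def)
  define \<mu> where "\<mu> = (\<beta>' \<bullet> \<beta>) / (\<beta> \<bullet> \<beta>)"
  define u where "u = \<beta>' - \<mu> *\<^sub>R \<beta>"
  have ub: "u \<bullet> \<beta> = 0" using bb by (simp add: u_def \<mu>_def inner_diff_left)
  have "q0 + u \<in> hyp \<beta> k" using q0 ub by (simp add: hyp_def inner_add_left)
  then have "(q0 + u) \<bullet> \<beta>' = k'" using e Lk by (auto simp: hyp_def)
  then have ub': "u \<bullet> \<beta>' = 0" using q0' by (simp add: inner_add_left)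
  have "u \<bullet> u = u \<bullet> \<beta>' - \<mu> * (u \<bullet> \<beta>)" by (simp add: u_def inner_diff_right)
  then have "\<beta>' = \<mu> *\<^sub>R \<beta>" using ub ub' by (simp add: u_def)
  moreover from this have "\<mu> = 1 \<or> \<mu> = -1" using root_reduced b by simp
  moreover have "k' = \<mu> * k" using q0' \<open>\<beta>' = \<mu> *\<^sub>R \<beta>\<close> bb by (simp add: q0_def)
  ultimately show ?thesis using Lk by (auto simp: aneg_def)
qed

lemma aact_eq_aneg_imp:
  assumes K: "K \<in> aroots \<Phi>" and L: "L \<in> aroots \<Phi>" and e: "aact K L = aneg L"
  shows "L = K \<or> L = aneg K"
proof -
  define k where "k = fst L \<bullet> coroot (fst K)"
  have h: "2 * aval L v = k * aval K v" for v
    using aval_arefl_aact[of L K v] aval_arefl[of L K v] by (simp add: e aval_aneg k_def)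
  have "k \<noteq> 0"
  proof
    assume "k = 0"
    then have "aval L v = aval (0, 0) v" for v using h[of v] by (simp add: aval_def)
    then have "L = (0, 0)" by (rule aval_inject)
    then show False using aroot_nonzero[OF L] by simp
  qed
  then have "aval L v = 0 \<longleftrightarrow> aval K v = 0" for v using h[of v] by auto
  then have "ahyp K = ahyp L" by (auto simp: aval_eq_0_iff[symmetric])
  then show ?thesis using ahyp_eq_imp[OF K L] aneg_aneg by metis
qed

text \<open>Only finitely many hyperplanes pass near \<open>q\<close> (\<open>finite_aroots_bounded\<close>).\<close>
lemma aval_sign_locally_constant:
  "\<exists>\<delta>>0. \<forall>v. dist v q < \<delta> \<longrightarrow>
     (\<forall>L\<in>aroots \<Phi>. aval L q \<noteq> 0 \<longrightarrow> aval L v * aval L q > 0)"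
proof -
  define B where "B = 1 + (\<Sum>\<beta>\<in>\<Phi>. norm \<beta>)"
  have B1: "B \<ge> 1" unfolding B_def by (simp add: sum_nonneg)
  have normB: "norm \<beta> \<le> B" if "\<beta> \<in> \<Phi>" for \<beta>
    using member_le_sum[of \<beta> \<Phi> norm] finite_roots that by (simp add: B_def)
  define T where "T = {L \<in> aroots \<Phi>. \<bar>snd L\<bar> \<le> \<bar>q \<bullet> fst L\<bar> + 1} \<inter> {L. aval L q \<noteq> 0}"
  have Tfin: "finite T"
    unfolding T_def using finite_aroots_bounded[of "\<lambda>\<beta>. \<bar>q \<bullet> \<beta>\<bar> + 1"] by auto
  define \<delta> where "\<delta> = Min (insert (1 / B) ((\<lambda>L. \<bar>aval L q\<bar> / B) ` T))"
  have "\<delta> > 0" unfolding \<delta>_def using Tfin B1 by (subst Min_gr_iff) (auto simp: T_def)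
  moreover have \<delta>1: "\<delta> \<le> 1 / B" and \<delta>T: "\<And>L. L \<in> T \<Longrightarrow> \<delta> \<le> \<bar>aval L q\<bar> / B"
    unfolding \<delta>_def using Tfin by (auto intro: Min_le)
  moreover have "aval L v * aval L q > 0"
    if d: "dist v q < \<delta>" and L: "L \<in> aroots \<Phi>" "aval L q \<noteq> 0" for v L
  proof (rule mult_pos_if_close)
    have "\<bar>aval L v - aval L q\<bar> = \<bar>(v - q) \<bullet> fst L\<bar>" by (simp add: aval_def inner_diff_left)
    also have "\<dots> \<le> norm (v - q) * norm (fst L)" by (rule Cauchy_Schwarz_ineq2)
    also have "\<dots> \<le> norm (v - q) * B"
      using normB L(1) by (simp add: aroots_def mult_left_mono mem_Times_iff)
    also have "\<dots> < \<delta> * B" using d B1 by (simp add: dist_norm)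
    also have "\<dots> \<le> \<bar>aval L q\<bar>"
    proof (cases "L \<in> T")
      case True
      then show ?thesis using \<delta>T B1 by (simp add: le_divide_eq)
    next
      case False
      then have "\<bar>aval L q\<bar> > 1" using L by (simp add: T_def aval_def)
      then show ?thesis using \<delta>1 B1 by (simp add: le_divide_eq)
    qed
    finally show "\<bar>aval L v - aval L q\<bar> < \<bar>aval L q\<bar>" .
  qed
  ultimately show ?thesis by blast
qed

end

context affine_weyl
begin

lemma wall_point:
  assumes L: "L \<in> aroots \<Phi>" and "wall \<Phi> \<xi> (ahyp L)"
  obtains q where "q \<in> closure C" "aval L q = 0"
    "\<And>L'. L' \<in> aroots \<Phi> \<Longrightarrow> aval L' q = 0 \<Longrightarrow> L' = L \<or> L' = aneg L"
proof -
  obtain q where q: "q \<in> closure C" "q \<in> ahyp L" "\<forall>H'\<in>hyps \<Phi>. q \<in> H' \<longrightarrow> H' = ahyp L"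
    using assms(2) by (auto simp: wall_def)
  have "L' = L \<or> L' = aneg L" if "L' \<in> aroots \<Phi>" "aval L' q = 0" for L'
    using q(3) that ahyp_eq_imp[OF L that(1)] by (simp add: aval_eq_0_iff hyps_eq)
  then show ?thesis using q that by (simp add: aval_eq_0_iff)
qed

text \<open>Reflect an alcove point close to the wall point: no other hyperplane comes between.\<close>
lemma wall_sep_arefl:
  assumes L: "L \<in> aroots \<Phi>" and "wall \<Phi> \<xi> (ahyp L)"
  obtains c where "c \<in> C" "sep c (arefl L c) = {L, aneg L}"
proof -
  obtain q where q: "q \<in> closure C" "aval L q = 0"
    "\<And>L'. L' \<in> aroots \<Phi> \<Longrightarrow> aval L' q = 0 \<Longrightarrow> L' = L \<or> L' = aneg L"
    using wall_point[OF assms] by blast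
  obtain \<delta> where \<delta>: "\<delta> > 0" "\<forall>v. dist v q < \<delta> \<longrightarrow>
           (\<forall>L'\<in>aroots \<Phi>. aval L' q \<noteq> 0 \<longrightarrow> aval L' v * aval L' q > 0)"
    using aval_sign_locally_constant by blast
  obtain c where c: "c \<in> C" "dist c q < \<delta>" using q(1) \<delta>(1) by (auto simp: closure_approachable)
  have L0: "fst L \<noteq> 0" using aroot_nonzero[OF L] .
  have "arefl L q = q" using q(2) by (simp add: arefl_apply)
  then have "dist (arefl L c) q = dist c q"
    using dist_refl[OF L0, of "snd L" c q] by (simp add: arefl_def)
  then have "dist (arefl L c) q < \<delta>" using c by simp
  have "L' \<in> {L, aneg L}" if "L' \<in> sep c (arefl L c)" for L'
  proof (rule ccontr)
    assume "L' \<notin> {L, aneg L}"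
    moreover have "L' \<in> aroots \<Phi>" using that by (simp add: sep_def)
    ultimately have "aval L' q \<noteq> 0" using q(3) by blast
    then have "aval L' c * aval L' q > 0" "aval L' (arefl L c) * aval L' q > 0"
      using \<delta>(2) c(2) \<open>dist (arefl L c) q < \<delta>\<close> that by (auto simp: sep_def)
    then show False using that by (auto simp: sep_def zero_less_mult_iff mult_less_0_iff)
  qed
  moreover have "aval L c * aval L c > 0"
    using aval_alcove_nonzero[OF c(1) L] by (auto simp: zero_less_mult_iff linorder_neq_iff)
  then have "{L, aneg L} \<subseteq> sep c (arefl L c)"
    using L aneg_aroots[OF L] by (auto simp: sep_def aval_aneg aval_arefl_self[OF L0])
  ultimately show ?thesis using that c(1) by blast
qed

end

section \<open>Right multiplication by a simple reflection\<close>

lemma mult_neg_iff_xor: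
  fixes a b c :: real
  assumes "a \<noteq> 0" "b \<noteq> 0" "c \<noteq> 0"
  shows "a * c < 0 \<longleftrightarrow> ((a * b < 0) \<noteq> (b * c < 0))"
  using assms by (auto simp: mult_less_0_iff)

lemma card_symdiff_pair:
  assumes "finite A" "a \<noteq> b" "a \<in> A \<longleftrightarrow> b \<in> A"
  shows "if a \<in> A then card ((A - {a, b}) \<union> ({a, b} - A)) + 2 = card A
         else card ((A - {a, b}) \<union> ({a, b} - A)) = card A + 2"
proof (cases "a \<in> A")
  case True
  then have "(A - {a, b}) \<union> ({a, b} - A) = A - {a, b}" using assms by auto
  moreover have "card {a, b} \<le> card A" using True assms by (intro card_mono) auto
  ultimately show ?thesis using True assms by (simp add: card_Diff_subset)
next
  case False
  then have "(A - {a, b}) \<union> ({a, b} - A) = A \<union> {a, b}" using assms by auto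
  then show ?thesis using False assms by (simp add: card_Un_disjoint)
qed

context root_sys
begin

lemma apull_inject:
  "w \<in> affW \<Phi> \<Longrightarrow> L \<in> aroots \<Phi> \<Longrightarrow> M \<in> aroots \<Phi> \<Longrightarrow> apull w L = apull w M \<longleftrightarrow> L = M"
  using bij_betw_apull[of w] by (auto simp: bij_betw_def inj_on_def)

lemma sep_affW_image:
  "w \<in> affW \<Phi> \<Longrightarrow> L \<in> aroots \<Phi> \<Longrightarrow> L \<in> sep (w p) (w q) \<longleftrightarrow> apull w L \<in> sep p q"
  by (simp add: sep_def aval_apull apull_aroots)

end

context affine_weyl
begin

lemma invs_comp_wall_refl:
  assumes y: "y \<in> affW \<Phi>" and K: "K \<in> aroots \<Phi>" "wall \<Phi> \<xi> (ahyp K)"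
    and M: "M \<in> aroots \<Phi>" "apull y M = K"
  shows "invs (y \<circ> arefl K) = (invs y - {M, aneg M}) \<union> ({M, aneg M} - invs y)"
proof -
  define s where "s = arefl K"
  obtain c where c: "c \<in> C" "sep c (s c) = {K, aneg K}"
    using wall_sep_arefl[OF K] s_def by blast
  have ys: "y \<circ> s \<in> affW \<Phi>" using affW_comp[OF y arefl_affW[OF K(1)]] by (simp add: s_def)
  have "L \<in> invs (y \<circ> s) \<longleftrightarrow> ((L \<in> invs y) \<noteq> (L \<in> {M, aneg M}))" if L: "L \<in> aroots \<Phi>" for L
  proof -
    have "L \<in> sep (y c) (y (s c)) \<longleftrightarrow> apull y L \<in> {K, aneg K}"
      using sep_affW_image[OF y L] c(2) by simp
    also have "\<dots> \<longleftrightarrow> L \<in> {M, aneg M}"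
      using M apull_aneg[OF y M(1)] apull_inject[OF y L M(1)]
        apull_inject[OF y L aneg_aroots[OF M(1)]] by auto
    finally have "L \<in> sep (y c) (y (s c)) \<longleftrightarrow> L \<in> {M, aneg M}" .
    moreover have "aval L c \<noteq> 0" "aval L (y c) \<noteq> 0" "aval L (y (s c)) \<noteq> 0"
      using aval_alcove_nonzero[OF c(1) L] aval_orbit_nonzero[OF y c(1) L]
        aval_orbit_nonzero[OF ys c(1) L] by auto
    then have "aval L c * aval L (y (s c)) < 0 \<longleftrightarrow>
      ((aval L c * aval L (y c) < 0) \<noteq> (aval L (y c) * aval L (y (s c)) < 0))"
      by (rule mult_neg_iff_xor)
    ultimately show ?thesis
      using invs_eq_sep[OF y c(1)] invs_eq_sep[OF ys c(1)] L by (simp add: sep_def)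
  qed
  then show ?thesis
    using invs_subset M(1) aneg_aroots[OF M(1)] unfolding s_def by blast
qed

lemma invs_comp_simple:
  assumes y: "y \<in> affW \<Phi>" and s: "s \<in> simples \<Phi> \<xi>"
  obtains M where "M \<in> aroots \<Phi>" "arefl M \<circ> y = y \<circ> s"
    "invs (y \<circ> s) = (invs y - {M, aneg M}) \<union> ({M, aneg M} - invs y)"
proof -
  obtain K where K: "K \<in> aroots \<Phi>" "wall \<Phi> \<xi> (ahyp K)" "s = arefl K"
    using s by (auto simp: simples_eq)
  obtain M where M: "M \<in> aroots \<Phi>" "apull y M = K"
    using bij_betw_apull[OF y] K(1) by (metis bij_betw_iff_bijections)
  show ?thesis
    using that[OF M(1)] arefl_comp_commute[OF y M(1)] invs_comp_wall_refl[OF y K(1,2) M] M(2) K(3)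
    by simp
qed

lemma card_invs_comp_simple:
  assumes "M \<in> aroots \<Phi>" "invs (y \<circ> s) = (invs y - {M, aneg M}) \<union> ({M, aneg M} - invs y)"
  shows "if M \<in> invs y then card (invs (y \<circ> s)) + 2 = card (invs y)
         else card (invs (y \<circ> s)) = card (invs y) + 2"
proof -
  have "M \<in> invs y \<longleftrightarrow> aneg M \<in> invs y" using aneg_invs aneg_aneg by metis
  from card_symdiff_pair[OF finite_invs aneg_neq[OF assms(1), symmetric] this]
  show ?thesis unfolding assms(2) .
qed

end

section \<open>Left multiplication by a reflection\<close>

lemma crossing_count_le:
  fixes a b a' b' X Y :: real
  assumes "a' = a - X" "b' = b - Y" "X * Y \<le> 0"
  shows "of_bool (a * b' < 0) + of_bool (a' * b < 0)
         \<le> of_bool (a * b < 0) + (of_bool (a' * b' < 0) :: nat)"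
  using assms by (auto simp: mult_less_0_iff mult_le_0_iff)

lemma card_add_le_if_indicator_le:
  assumes "finite U" "A \<subseteq> U" "A' \<subseteq> U" "B \<subseteq> U" "B' \<subseteq> U" "D \<subseteq> U"
    and "\<And>x. x \<in> U \<Longrightarrow> of_bool (x \<in> A) + of_bool (x \<in> A') + 2 * of_bool (x \<in> D)
           \<le> (of_bool (x \<in> B) + of_bool (x \<in> B') :: nat)"
  shows "card A + card A' + 2 * card D \<le> card B + card B'"
proof -
  have "(\<Sum>x\<in>U. of_bool (x \<in> A) + of_bool (x \<in> A') + 2 * of_bool (x \<in> D))
      \<le> (\<Sum>x\<in>U. of_bool (x \<in> B) + (of_bool (x \<in> B') :: nat))"
    by (rule sum_mono) (rule assms(7))
  then show ?thesis
    using assms(1-6) by (simp add: sum.distrib sum_distrib_left[symmetric] inf_absorb2)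
qed

context root_sys
begin

lemma indicator_sep_arefl_le:
  assumes K: "K \<in> aroots \<Phi>" and KB: "aval K c * aval K p < 0" and L: "L \<in> aroots \<Phi>"
  shows "of_bool (L \<in> sep c (arefl K p)) + of_bool (L \<in> sep (arefl K c) p)
           + 2 * of_bool (L \<in> {K, aneg K})
         \<le> of_bool (L \<in> sep c p) + (of_bool (L \<in> sep (arefl K c) (arefl K p)) :: nat)"
proof (cases "L \<in> {K, aneg K}")
  case True
  then show ?thesis
    using KB K aneg_aroots[OF K] by (auto simp: sep_def aval_arefl_self aroot_nonzero aval_aneg)
next
  case False
  define k where "k = fst L \<bullet> coroot (fst K)"
  have "(k * aval K c) * (k * aval K p) = k\<^sup>2 * (aval K c * aval K p)"
    by (simp add: power2_eq_square algebra_simps)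
  also have "\<dots> \<le> 0" using KB by (simp add: mult_nonneg_nonpos)
  finally have "(k * aval K c) * (k * aval K p) \<le> 0" .
  then show ?thesis
    using crossing_count_le[of "aval L (arefl K c)" "aval L c" "k * aval K c"
        "aval L (arefl K p)" "aval L p" "k * aval K p"] L False
    by (simp add: sep_def aval_arefl k_def)
qed

end

context affine_weyl
begin

text \<open>With \<open>r = arefl K\<close> and \<open>p = y c0\<close>, the reflection \<open>aact K\<close> maps \<open>sep c0 (r p)\<close> onto
  \<open>sep (r c0) p\<close> and \<open>sep c0 p\<close> onto \<open>sep (r c0) (r p)\<close>; counting each affine root over the
  four sets gives \<open>2 |N(r y)| + 4 \<le> 2 |N(y)|\<close>.\<close>
lemma card_invs_arefl_le:
  assumes y: "y \<in> affW \<Phi>" and K: "K \<in> aroots \<Phi>" and KN: "K \<in> invs y"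
  shows "card (invs (arefl K \<circ> y)) + 2 \<le> card (invs y)"
proof -
  define r where "r = arefl K"
  define p where "p = y c0"
  define A where "A = sep c0 (r p)"
  define B where "B = sep c0 p"
  define A' where "A' = sep (r c0) p"
  define B' where "B' = sep (r c0) (r p)"
  define U where "U = A \<union> A' \<union> B \<union> B'"
  have K0: "fst K \<noteq> 0" using aroot_nonzero[OF K] .
  have A'_eq: "A' = aact K ` A" and B'_eq: "B' = aact K ` B"
    using sep_arefl[OF K, of c0 "r p"] sep_arefl[OF K, of c0 p]
    by (simp_all add: A'_def A_def B'_def B_def r_def arefl_arefl[OF K0])
  have subs: "A \<subseteq> aroots \<Phi>" "A' \<subseteq> aroots \<Phi>" "B \<subseteq> aroots \<Phi>" "B' \<subseteq> aroots \<Phi>"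
    by (simp_all add: A_def A'_def B_def B'_def sep_subset)
  have KB: "aval K c0 * aval K p < 0" using KN K by (simp add: invs_def sep_def p_def)
  have pointwise: "of_bool (L \<in> A) + of_bool (L \<in> A') + 2 * of_bool (L \<in> {K, aneg K})
      \<le> of_bool (L \<in> B) + (of_bool (L \<in> B') :: nat)" if "L \<in> U" for L
  proof -
    have "L \<in> aroots \<Phi>" using that subs by (auto simp: U_def)
    then show ?thesis
      unfolding A_def A'_def B_def B'_def r_def by (rule indicator_sep_arefl_le[OF K KB])
  qed
  have fin: "finite U" by (simp add: U_def A_def A'_def B_def B'_def finite_sep)
  have "{K, aneg K} \<subseteq> U"
    using KB K aneg_aroots[OF K] by (auto simp: U_def B_def sep_def aval_aneg)
  from card_add_le_if_indicator_le[OF fin _ _ _ _ this pointwise]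
  have "card A + card A' + 2 * card {K, aneg K} \<le> card B + card B'" by (auto simp: U_def)
  moreover have inj: "inj_on (aact K) X" if "X \<subseteq> aroots \<Phi>" for X
    using bij_betw_aact[OF K] inj_on_subset that by (auto simp: bij_betw_def)
  then have "card A' = card A" "card B' = card B"
    using A'_eq B'_eq card_image[OF inj[OF subs(1)]] card_image[OF inj[OF subs(3)]] by simp_all
  moreover have "card {K, aneg K} = 2" using aneg_neq[OF K] by simp
  moreover have "invs (r \<circ> y) = A" "invs y = B" by (simp_all add: invs_def A_def B_def p_def)
  ultimately show ?thesis by (simp add: r_def)
qed

lemma card_invs_arefl_ge:
  assumes y: "y \<in> affW \<Phi>" and K: "K \<in> aroots \<Phi>" and KN: "K \<notin> invs y"
  shows "card (invs y) + 2 \<le> card (invs (arefl K \<circ> y))"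
proof -
  have K0: "fst K \<noteq> 0" using aroot_nonzero[OF K] .
  have "aval K c0 * aval K (y c0) > 0"
    using KN K aval_alcove_nonzero[OF c0_alcove K] aval_orbit_nonzero[OF y c0_alcove K]
    by (auto simp: invs_def sep_def zero_less_mult_iff mult_less_0_iff linorder_neq_iff)
  then have "K \<in> invs (arefl K \<circ> y)"
    using K by (simp add: invs_def sep_def aval_arefl_self[OF K0])
  from card_invs_arefl_le[OF affW_comp[OF arefl_affW[OF K] y] K this]
  show ?thesis by (simp add: comp_def arefl_arefl[OF K0])
qed

end

section \<open>Every nontrivial element separates a wall from the fundamental alcove\<close>

lemma affine_root_between:
  fixes a b :: real
  assumes "a * b < 0"
  shows "0 < a / (a - b)" "a / (a - b) < 1"
  using assms by (auto simp: mult_less_0_iff divide_less_eq zero_less_divide_iff)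

lemma affine_eq_0_iff:
  fixes a b s :: real
  assumes "a \<noteq> b"
  shows "a + s * (b - a) = 0 \<longleftrightarrow> s = a / (a - b)"
  using assms by (auto simp: field_simps)

lemma affine_same_sign_before_root:
  fixes a b s :: real
  assumes "a * b < 0" "0 \<le> s" "s < a / (a - b)"
  shows "(a + s * (b - a)) * a > 0"
proof -
  have "a \<noteq> 0" using assms(1) by auto
  then have "a * a > 0" by (metis not_real_square_gt_zero)
  then have pos: "a * (a - b) > 0" using assms(1) by (simp add: algebra_simps)
  have "s < (a * a) / (a * (a - b))" using assms(3) \<open>a \<noteq> 0\<close> by simp
  then have "s * (a * (a - b)) < a * a" by (simp only: pos_less_divide_eq[OF pos])
  then show ?thesis by (simp add: algebra_simps)
qed

lemma affine_same_sign_no_root: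
  fixes a b s :: real
  assumes "a * b > 0" "0 \<le> s" "s \<le> 1"
  shows "(a + s * (b - a)) * a > 0"
proof -
  have "a * a > 0" using assms(1) by (metis mult_eq_0_iff not_real_square_gt_zero less_irrefl)
  have "(a + s * (b - a)) * a = (1 - s) * (a * a) + s * (a * b)" by (simp add: algebra_simps)
  moreover have "(1 - s) * (a * a) + s * (a * b) > 0"
  proof (cases "s = 1")
    case False
    then have "(1 - s) * (a * a) > 0" using assms(3) \<open>a * a > 0\<close> by simp
    moreover have "s * (a * b) \<ge> 0" using assms(1,2) by simp
    ultimately show ?thesis by linarith
  qed (use assms(1) in simp)
  ultimately show ?thesis by simp
qed

lemma aval_segment: "aval L (c + s *\<^sub>R (p - c)) = aval L c + s * (aval L p - aval L c)"
  by (simp add: aval_def inner_add_left inner_diff_left algebra_simps)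

lemma in_closure_if_open_segment_subset:
  fixes a b :: "'a::euclidean_space"
  assumes "a \<in> S" "open_segment a b \<subseteq> S"
  shows "b \<in> closure S"
proof (cases "a = b")
  case False
  then have "b \<in> closure (open_segment a b)" by simp
  then show ?thesis using closure_mono[OF assms(2)] by blast
qed (use assms(1) closure_subset in blast)

context root_sys
begin

lemma negligible_proportional_values:
  assumes L1: "L1 \<in> aroots \<Phi>" and L2: "L2 \<in> aroots \<Phi>" and "L2 \<noteq> L1" "L2 \<noteq> aneg L1"
    and p: "aval L1 p \<noteq> 0"
  shows "negligible {x. aval L1 p * aval L2 x = aval L2 p * aval L1 x}"
proof -
  define v where "v = aval L1 p *\<^sub>R fst L2 - aval L2 p *\<^sub>R fst L1"
  have "v \<noteq> 0"
  proof
    assume "v = 0"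
    define \<mu> where "\<mu> = aval L2 p / aval L1 p"
    have "fst L2 = (1 / aval L1 p) *\<^sub>R (aval L1 p *\<^sub>R fst L2)" using p by simp
    also have "\<dots> = \<mu> *\<^sub>R fst L1" using \<open>v = 0\<close> by (simp add: v_def \<mu>_def)
    finally have "fst L2 = \<mu> *\<^sub>R fst L1" .
    moreover then have "\<mu> = 1 \<or> \<mu> = -1"
      using root_reduced[of "fst L1" \<mu>] L1 L2 by (auto simp: aroots_def mem_Times_iff)
    moreover have "aval L2 p = \<mu> * aval L1 p" using p by (simp add: \<mu>_def)
    ultimately show False
      using assms(3,4) by (auto simp: aval_def aneg_def prod_eq_iff algebra_simps)
  qed
  moreover have "{x. aval L1 p * aval L2 x = aval L2 p * aval L1 x}
      = {x. v \<bullet> x = aval L1 p * snd L2 - aval L2 p * snd L1}"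
    by (auto simp: v_def aval_def inner_diff_left algebra_simps inner_commute)
  ultimately show ?thesis by (simp add: negligible_hyperplane)
qed

end

context affine_weyl
begin

lemma wallI:
  assumes "L \<in> aroots \<Phi>" "q \<in> closure C" "aval L q = 0"
    and "\<And>L'. L' \<in> aroots \<Phi> \<Longrightarrow> aval L' q = 0 \<Longrightarrow> L' = L \<or> L' = aneg L"
  shows "wall \<Phi> \<xi> (ahyp L)"
  unfolding wall_def
proof (intro conjI bexI ballI impI)
  show "ahyp L \<in> hyps \<Phi>" using assms(1) by (simp add: hyps_eq)
  show "q \<in> closure C \<inter> ahyp L" using assms(2,3) by (simp add: aval_eq_0_iff)
  fix H assume "H \<in> hyps \<Phi>" "q \<in> H"
  then obtain L' where "L' \<in> aroots \<Phi>" "H = ahyp L'" "aval L' q = 0"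
    by (auto simp: hyps_eq aval_eq_0_iff)
  then show "H = ahyp L" using assms(4) ahyp_aneg by metis
qed

lemma exists_generic_alcove_point:
  assumes "finite F" "F \<subseteq> aroots \<Phi>" "\<And>L. L \<in> F \<Longrightarrow> aval L p \<noteq> 0"
  obtains c where "c \<in> C"
    "\<And>L1 L2. L1 \<in> F \<Longrightarrow> L2 \<in> F \<Longrightarrow> L2 \<noteq> L1 \<Longrightarrow> L2 \<noteq> aneg L1 \<Longrightarrow>
       aval L1 p * aval L2 c \<noteq> aval L2 p * aval L1 c"
proof -
  define Z where "Z = (\<lambda>(L1, L2). {x. aval L1 p * aval L2 x = aval L2 p * aval L1 x})
    ` {(L1, L2) \<in> F \<times> F. L2 \<noteq> L1 \<and> L2 \<noteq> aneg L1}"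
  have "finite {(L1, L2) \<in> F \<times> F. L2 \<noteq> L1 \<and> L2 \<noteq> aneg L1}"
    using assms(1) by (auto intro: finite_subset[of _ "F \<times> F"])
  then have "negligible (\<Union>Z)"
    unfolding Z_def using assms(2,3)
    by (intro negligible_Union) (auto intro!: negligible_proportional_values)
  then have "\<not> C \<subseteq> \<Union>Z"
    using open_not_negligible[OF open_alcove alcove_nonempty] negligible_subset by blast
  then show ?thesis using that by (auto simp: Z_def)
qed

lemma aval_same_sign_if_not_sep:
  assumes "c \<in> C" "L \<in> aroots \<Phi>" "aval L p \<noteq> 0" "L \<notin> sep c p"
  shows "aval L c * aval L p > 0"
proof -
  have "aval L c * aval L p \<noteq> 0" using assms aval_alcove_nonzero by simp
  moreover have "\<not> aval L c * aval L p < 0" using assms by (simp add: sep_def)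
  ultimately show ?thesis by linarith
qed

lemma segment_in_alcove_before_crossing:
  assumes c: "c \<in> C" and p: "\<And>L. L \<in> aroots \<Phi> \<Longrightarrow> aval L p \<noteq> 0"
    and s: "0 \<le> s" "s \<le> 1" "\<And>L. L \<in> sep c p \<Longrightarrow> s < aval L c / (aval L c - aval L p)"
  shows "c + s *\<^sub>R (p - c) \<in> C"
proof (rule alcoveI[OF c], intro ballI)
  fix L assume L: "L \<in> aroots \<Phi>"
  show "aval L (c + s *\<^sub>R (p - c)) * aval L c > 0"
  proof (cases "L \<in> sep c p")
    case True
    then have "aval L c * aval L p < 0" by (simp add: sep_def)
    then show ?thesis
      unfolding aval_segment using affine_same_sign_before_root s(1) s(3)[OF True] by blast
  next
    case False
    then show ?thesis
      unfolding aval_segment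
      using affine_same_sign_no_root[OF aval_same_sign_if_not_sep[OF c L p[OF L] False] s(1,2)]
      by simp
  qed
qed

lemma segment_in_alcove_closure:
  assumes c: "c \<in> C" and p: "\<And>L. L \<in> aroots \<Phi> \<Longrightarrow> aval L p \<noteq> 0"
    and m: "0 < m" "m \<le> 1" "\<And>L. L \<in> sep c p \<Longrightarrow> m \<le> aval L c / (aval L c - aval L p)"
  shows "c + m *\<^sub>R (p - c) \<in> closure C"
proof (rule in_closure_if_open_segment_subset[OF c], rule subsetI)
  fix x assume "x \<in> open_segment c (c + m *\<^sub>R (p - c))"
  then obtain u where u: "0 < u" "u < 1" "x = (1 - u) *\<^sub>R c + u *\<^sub>R (c + m *\<^sub>R (p - c))"
    by (auto simp: in_segment)
  then have "x = c + (u * m) *\<^sub>R (p - c)" by (simp add: algebra_simps)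
  moreover have "0 \<le> u * m" "u * m < m" using u m by simp_all
  moreover have "u * m \<le> 1" using u m by (intro mult_le_one) auto
  ultimately show "x \<in> C"
    using segment_in_alcove_before_crossing[OF c p] m(3) by fastforce
qed

text \<open>Walk from a generic alcove point \<open>c\<close> towards \<open>p\<close>: the first hyperplane reached is
  crossed at a point of the closure of \<open>C\<close> lying on no other hyperplane.\<close>
lemma first_crossing_is_wall:
  assumes c: "c \<in> C" and p: "\<And>L. L \<in> aroots \<Phi> \<Longrightarrow> aval L p \<noteq> 0" and ne: "sep c p \<noteq> {}"
    and generic: "\<And>L1 L2. L1 \<in> sep c p \<Longrightarrow> L2 \<in> sep c p \<Longrightarrow> L2 \<noteq> L1 \<Longrightarrow> L2 \<noteq> aneg L1 \<Longrightarrow>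
       aval L1 p * aval L2 c \<noteq> aval L2 p * aval L1 c"
  obtains L where "L \<in> sep c p" "wall \<Phi> \<xi> (ahyp L)"
proof -
  define F where "F = sep c p"
  have F: "aval L c * aval L p < 0" if "L \<in> F" for L using that by (simp add: F_def sep_def)
  define t where "t L = aval L c / (aval L c - aval L p)" for L
  define m where "m = Min (t ` F)"
  have "m \<in> t ` F" using ne finite_sep by (simp add: m_def F_def)
  then obtain L1 where L1: "L1 \<in> F" "t L1 = m" by blast
  have m_le: "m \<le> t L" if "L \<in> F" for L using that finite_sep by (simp add: m_def F_def)
  have m: "0 < m" "m < 1" using affine_root_between[OF F[OF L1(1)]] L1(2) by (simp_all add: t_def)
  define q where "q = c + m *\<^sub>R (p - c)"
  have q_closure: "q \<in> closure C"
    unfolding q_def using segment_in_alcove_closure[OF c p] m m_le by (simp add: F_def t_def)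
  have t_root: "aval L q = 0 \<longleftrightarrow> m = t L" if "L \<in> F" for L
  proof -
    have "aval L c \<noteq> aval L p" using F[OF that] by auto
    then show ?thesis unfolding q_def aval_segment t_def by (rule affine_eq_0_iff)
  qed
  have only_L1: "L = L1 \<or> L = aneg L1" if L: "L \<in> aroots \<Phi>" "aval L q = 0" for L
  proof (cases "L \<in> F")
    case True
    then have "t L1 = t L" using t_root L(2) L1(2) by simp
    moreover have "aval L1 c - aval L1 p \<noteq> 0" "aval L c - aval L p \<noteq> 0"
      using F[OF L1(1)] F[OF True] by auto
    ultimately have "aval L1 c * (aval L c - aval L p) = aval L c * (aval L1 c - aval L1 p)"
      by (simp add: t_def frac_eq_eq)
    then have "aval L1 p * aval L c = aval L p * aval L1 c" by (simp add: algebra_simps)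
    then show ?thesis using generic[of L1 L] L1(1) True by (auto simp: F_def)
  next
    case False
    have "(aval L c + m * (aval L p - aval L c)) * aval L c > 0"
      using affine_same_sign_no_root aval_same_sign_if_not_sep[OF c L(1) p[OF L(1)]] False m
      by (simp add: F_def)
    then show ?thesis using L(2) by (simp add: q_def aval_segment)
  qed
  have "L1 \<in> aroots \<Phi>" using L1(1) sep_subset by (auto simp: F_def)
  moreover have "aval L1 q = 0" using t_root L1 by simp
  ultimately have "wall \<Phi> \<xi> (ahyp L1)" using wallI q_closure only_L1 by blast
  then show ?thesis using that L1(1) by (simp add: F_def)
qed

lemma exists_wall_in_invs:
  assumes y: "y \<in> affW \<Phi>" and ne: "invs y \<noteq> {}"
  obtains L where "L \<in> invs y" "wall \<Phi> \<xi> (ahyp L)"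
proof -
  define p where "p = y c0"
  have p: "aval L p \<noteq> 0" if "L \<in> aroots \<Phi>" for L
    using aval_orbit_nonzero[OF y c0_alcove that] by (simp add: p_def)
  obtain c where c: "c \<in> C"
    "\<And>L1 L2. L1 \<in> invs y \<Longrightarrow> L2 \<in> invs y \<Longrightarrow> L2 \<noteq> L1 \<Longrightarrow> L2 \<noteq> aneg L1 \<Longrightarrow>
       aval L1 p * aval L2 c \<noteq> aval L2 p * aval L1 c"
    using exists_generic_alcove_point[OF finite_invs invs_subset] p invs_subset by blast
  have "invs y = sep c p"
    unfolding invs_def p_def
  proof (rule sep_eq_if_same_signs)
    fix L assume L: "L \<in> aroots \<Phi>"
    show "aval L c0 * aval L c > 0" using aval_alcove_same_sign[OF c0_alcove c(1) L] .
    show "aval L (y c0) * aval L (y c0) > 0"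
      using p[OF L] by (metis not_real_square_gt_zero p_def)
  qed
  then show ?thesis using first_crossing_is_wall[OF c(1) p] ne c(2) that by metis
qed

end

section \<open>The simple reflections generate the affine Weyl group\<close>

definition wprod :: "('a \<Rightarrow> 'a) list \<Rightarrow> 'a \<Rightarrow> 'a" where
  "wprod xs = foldr (\<circ>) xs id"

lemma wprod_Nil [simp]: "wprod [] = id"
  and wprod_Cons [simp]: "wprod (s # xs) = s \<circ> wprod xs"
  by (simp_all add: wprod_def)

lemma wprod_append [simp]: "wprod (xs @ ys) = wprod xs \<circ> wprod ys"
  by (induction xs) (simp_all add: comp_assoc)

context affine_weyl
begin

definition simple_products :: "('a \<Rightarrow> 'a) set" where
  "simple_products = {wprod xs | xs. set xs \<subseteq> simples \<Phi> \<xi>}"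

lemma id_simple_products: "id \<in> simple_products"
  unfolding simple_products_def by (auto intro: exI[of _ "[]"])

lemma simple_in_simple_products: "s \<in> simples \<Phi> \<xi> \<Longrightarrow> s \<in> simple_products"
  unfolding simple_products_def by (auto intro: exI[of _ "[s]"])

lemma comp_simple_products:
  assumes "a \<in> simple_products" "b \<in> simple_products"
  shows "a \<circ> b \<in> simple_products"
proof -
  obtain xs ys where xs: "set xs \<subseteq> simples \<Phi> \<xi>" and ys: "set ys \<subseteq> simples \<Phi> \<xi>"
    and ab: "a \<circ> b = wprod (xs @ ys)"
    using assms by (auto simp: simple_products_def)
  have "set (xs @ ys) \<subseteq> simples \<Phi> \<xi>" using xs ys by simp
  with ab show ?thesis unfolding simple_products_def by blast
qed

lemma invs_arefl_self:
  assumes "K \<in> aroots \<Phi>"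
  shows "K \<in> invs (arefl K)"
proof -
  have "aval K c0 * aval K c0 > 0"
    using aval_alcove_nonzero[OF c0_alcove assms] by (metis not_real_square_gt_zero)
  then show ?thesis using assms by (simp add: invs_def sep_def aval_arefl_self aroot_nonzero)
qed

lemma aact_invs_arefl: "K \<in> aroots \<Phi> \<Longrightarrow> aact K ` invs (arefl K) = invs (arefl K)"
  using sep_arefl[of K c0 "arefl K c0"] arefl_arefl[OF aroot_nonzero] sep_commute
  by (simp add: invs_def)

lemma aact_fixed_notin_invs_arefl:
  assumes "L \<in> aroots \<Phi>" "aact K L = L"
  shows "L \<notin> invs (arefl K)"
  using aval_arefl_aact[of L K c0] aval_alcove_same_sign[OF c0_alcove c0_alcove assms(1)] assms(2)
  by (simp add: invs_def sep_def)

lemma card_invs_conj_less: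
  assumes K: "K \<in> aroots \<Phi>" and L: "L \<in> aroots \<Phi>" "wall \<Phi> \<xi> (ahyp L)" "L \<in> invs (arefl K)"
    and LK: "L \<noteq> K" "L \<noteq> aneg K"
  shows "card (invs (arefl (aact L K))) < card (invs (arefl K))"
proof -
  define y where "y = arefl K"
  define M where "M = aact K L"
  have y: "y \<in> affW \<Phi>" using arefl_affW[OF K] by (simp add: y_def)
  have M: "M \<in> aroots \<Phi>" "apull y M = L"
    using aact_aroots[OF K L(1)] aact_aact[OF aroot_nonzero[OF K]]
    by (simp_all add: M_def y_def apull_arefl)
  have "M \<in> invs y" using aact_invs_arefl[OF K] L(3) by (force simp: M_def y_def)
  then have "invs (y \<circ> arefl L) = invs y - {M, aneg M}"
    using invs_comp_wall_refl[OF y L(1,2) M] aneg_invs by blast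
  moreover have "L \<noteq> M" "L \<noteq> aneg M"
    using aact_fixed_notin_invs_arefl[OF L(1)] aact_eq_aneg_imp[OF K L(1)] L(3) LK aneg_aneg
    by (metis M_def y_def)+
  ultimately have "L \<in> invs (y \<circ> arefl L)" using L(3) by (simp add: y_def)
  from card_invs_arefl_le[OF affW_comp[OF y arefl_affW[OF L(1)]] L(1) this]
  have "card (invs (arefl L \<circ> (y \<circ> arefl L))) + 2 \<le> card (invs (y \<circ> arefl L))" .
  moreover have "card (invs (y \<circ> arefl L)) \<le> card (invs y)"
    using \<open>invs (y \<circ> arefl L) = _\<close> finite_invs by (simp add: card_mono)
  moreover have "arefl L \<circ> (y \<circ> arefl L) = arefl (aact L K)"
    using arefl_conj[OF aroot_nonzero[OF L(1)], of K] by (auto simp: y_def)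
  ultimately show ?thesis by (simp add: y_def)
qed

lemma arefl_simple_products: "K \<in> aroots \<Phi> \<Longrightarrow> arefl K \<in> simple_products"
proof (induction "card (invs (arefl K))" arbitrary: K rule: less_induct)
  case less
  obtain L where L: "L \<in> invs (arefl K)" "wall \<Phi> \<xi> (ahyp L)"
    using exists_wall_in_invs[OF arefl_affW[OF less.prems]] invs_arefl_self[OF less.prems] by blast
  have L_root: "L \<in> aroots \<Phi>" using L(1) invs_subset by blast
  have s: "arefl L \<in> simple_products"
    using L_root L(2) by (auto simp: simples_eq intro: simple_in_simple_products)
  show ?case
  proof (cases "L = K \<or> L = aneg K")
    case True
    then show ?thesis using s arefl_aneg by metis
  next
    case False
    have "arefl (aact L K) \<in> simple_products"
      using less.hyps card_invs_conj_less[OF less.prems L_root L(2) L(1)] False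
        aact_aroots[OF L_root less.prems] by blast
    moreover have "arefl K = arefl L \<circ> arefl (aact L K) \<circ> arefl L"
      using arefl_conj[OF aroot_nonzero[OF L_root], of K] arefl_arefl[OF aroot_nonzero[OF L_root]]
      by (auto simp: fun_eq_iff) metis
    ultimately show ?thesis using s comp_simple_products by metis
  qed
qed

lemma affW_subset_simple_products: "affW \<Phi> \<subseteq> simple_products"
proof
  fix w assume "w \<in> affW \<Phi>"
  then show "w \<in> simple_products"
  proof (induction rule: affW_induct)
    case id
    then show ?case by (rule id_simple_products)
  next
    case (arefl M w)
    then show ?case using comp_simple_products arefl_simple_products by blast
  qed
qed

end

section \<open>Length counts separating hyperplanes\<close>

context affine_weyl
begin

lemma wprod_affW: "set xs \<subseteq> simples \<Phi> \<xi> \<Longrightarrow> wprod xs \<in> affW \<Phi>"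
  by (induction xs) (auto simp: simples_eq intro: affW.id_in affW_comp arefl_affW)

lemma simple_affW: "s \<in> simples \<Phi> \<xi> \<Longrightarrow> s \<in> affW \<Phi>"
  by (auto simp: simples_eq arefl_affW)

lemma simple_comp_self:
  assumes "s \<in> simples \<Phi> \<xi>"
  shows "s \<circ> s = id"
proof -
  obtain K where "K \<in> aroots \<Phi>" "s = arefl K" using assms by (auto simp: simples_eq)
  then show ?thesis by (simp add: fun_eq_iff arefl_arefl aroot_nonzero)
qed

lemma invs_wprod_letter:
  assumes "set xs \<subseteq> simples \<Phi> \<xi>" "L \<in> invs (wprod xs)"
  shows "\<exists>i<length xs. arefl L \<circ> wprod (take i xs) = wprod (take i xs) \<circ> xs ! i"
  using assms
proof (induction xs arbitrary: L rule: rev_induct)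
  case Nil
  then show ?case using invs_id by (simp add: id_def)
next
  case (snoc s xs)
  have xs: "set xs \<subseteq> simples \<Phi> \<xi>" and s: "s \<in> simples \<Phi> \<xi>" using snoc.prems(1) by auto
  obtain M where M: "M \<in> aroots \<Phi>" "arefl M \<circ> wprod xs = wprod xs \<circ> s"
    "invs (wprod xs \<circ> s) = (invs (wprod xs) - {M, aneg M}) \<union> ({M, aneg M} - invs (wprod xs))"
    using invs_comp_simple[OF wprod_affW[OF xs] s] by blast
  have "L \<in> invs (wprod xs \<circ> s)" using snoc.prems(2) by (simp add: comp_def)
  then have "L \<in> invs (wprod xs) \<or> L = M \<or> L = aneg M" using M(3) by blast
  then consider "L \<in> invs (wprod xs)" | "L = M \<or> L = aneg M" by blast
  then show ?case
  proof cases
    case 1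
    then obtain i where "i < length xs" "arefl L \<circ> wprod (take i xs) = wprod (take i xs) \<circ> xs ! i"
      using snoc.IH[OF xs] by blast
    then show ?thesis by (intro exI[of _ i]) (simp add: nth_append)
  next
    case 2
    then have "arefl L \<circ> wprod xs = wprod xs \<circ> s" using M(2) arefl_aneg by metis
    then show ?thesis by (intro exI[of _ "length xs"]) simp
  qed
qed

lemma deletion_condition:
  assumes xs: "set xs \<subseteq> simples \<Phi> \<xi>" and M: "M \<in> invs (wprod xs)"
  obtains zs where "set zs \<subseteq> simples \<Phi> \<xi>" "length zs < length xs" "wprod zs = arefl M \<circ> wprod xs"
proof -
  obtain i where i: "i < length xs" "arefl M \<circ> wprod (take i xs) = wprod (take i xs) \<circ> xs ! i"
    using invs_wprod_letter[OF xs M] by blast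
  define a where "a = wprod (take i xs)"
  define u where "u = wprod (drop (Suc i) xs)"
  have si: "xs ! i \<in> simples \<Phi> \<xi>" using xs i(1) nth_mem by blast
  have "wprod xs = wprod (take i xs @ [xs ! i] @ drop (Suc i) xs)"
    using id_take_nth_drop[OF i(1)] by simp
  then have "wprod xs = a \<circ> xs ! i \<circ> u" by (simp add: a_def u_def comp_assoc)
  then have "arefl M \<circ> wprod xs = a \<circ> (xs ! i \<circ> xs ! i) \<circ> u"
    using i(2) unfolding a_def by (metis comp_assoc)
  also have "\<dots> = wprod (take i xs @ drop (Suc i) xs)"
    using simple_comp_self[OF si] by (simp add: a_def u_def)
  finally have "wprod (take i xs @ drop (Suc i) xs) = arefl M \<circ> wprod xs" ..
  moreover have "set (take i xs @ drop (Suc i) xs) \<subseteq> simples \<Phi> \<xi>"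
    using xs set_take_subset[of i xs] set_drop_subset[of "Suc i" xs] by auto
  moreover have "length (take i xs @ drop (Suc i) xs) < length xs" using i(1) by simp
  ultimately show ?thesis using that by blast
qed

lemma card_invs_reduced_word:
  assumes "set xs \<subseteq> simples \<Phi> \<xi>"
    and "\<And>zs. set zs \<subseteq> simples \<Phi> \<xi> \<Longrightarrow> wprod zs = wprod xs \<Longrightarrow> length xs \<le> length zs"
  shows "card (invs (wprod xs)) = 2 * length xs"
  using assms
proof (induction xs rule: rev_induct)
  case Nil
  then show ?case using invs_id by (simp add: id_def)
next
  case (snoc s xs)
  have xs: "set xs \<subseteq> simples \<Phi> \<xi>" and s: "s \<in> simples \<Phi> \<xi>" using snoc.prems(1) by auto
  have eq: "wprod (xs @ [s]) = wprod xs \<circ> s" by simp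
  have reduced: "length (xs @ [s]) \<le> length zs"
    if "set zs \<subseteq> simples \<Phi> \<xi>" "wprod zs = wprod xs \<circ> s" for zs
    using snoc.prems(2)[of zs] that eq by simp
  have IH: "card (invs (wprod xs)) = 2 * length xs"
  proof (rule snoc.IH[OF xs])
    fix zs assume "set zs \<subseteq> simples \<Phi> \<xi>" "wprod zs = wprod xs"
    then show "length xs \<le> length zs"
      using reduced[of "zs @ [s]"] s by simp
  qed
  obtain M where M: "M \<in> aroots \<Phi>" "arefl M \<circ> wprod xs = wprod xs \<circ> s"
    "invs (wprod xs \<circ> s) = (invs (wprod xs) - {M, aneg M}) \<union> ({M, aneg M} - invs (wprod xs))"
    using invs_comp_simple[OF wprod_affW[OF xs] s] by blast
  have "M \<notin> invs (wprod xs)"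
  proof
    assume "M \<in> invs (wprod xs)"
    then obtain zs where "set zs \<subseteq> simples \<Phi> \<xi>" "length zs < length xs"
      "wprod zs = arefl M \<circ> wprod xs"
      using deletion_condition[OF xs] by blast
    then show False using reduced[of zs] M(2) by simp
  qed
  then have "card (invs (wprod xs \<circ> s)) = 2 * length (xs @ [s])"
    using card_invs_comp_simple[OF M(1,3)] IH by simp
  then show ?case unfolding eq .
qed

lemma card_invs_eq_len:
  assumes "w \<in> affW \<Phi>"
  shows "card (invs w) = 2 * len \<Phi> \<xi> w"
proof -
  define P where "P n \<longleftrightarrow> (\<exists>xs. length xs = n \<and> set xs \<subseteq> simples \<Phi> \<xi> \<and> wprod xs = w)" for n
  have "\<exists>n. P n"
    using affW_subset_simple_products assms by (auto simp: P_def simple_products_def)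
  then have "P (len \<Phi> \<xi> w)" unfolding len_def wprod_def[symmetric] P_def[symmetric] by (rule LeastI_ex)
  then obtain xs where xs: "length xs = len \<Phi> \<xi> w" "set xs \<subseteq> simples \<Phi> \<xi>" "wprod xs = w"
    by (auto simp: P_def)
  have "length xs \<le> length zs" if "set zs \<subseteq> simples \<Phi> \<xi>" "wprod zs = wprod xs" for zs
    using Least_le[of P "length zs"] that xs by (auto simp: P_def len_def wprod_def)
  from card_invs_reduced_word[OF xs(2) this] show ?thesis using xs by simp
qed

lemma DR_iff_card_invs:
  assumes "x \<in> affW \<Phi>"
  shows "s \<in> DR \<Phi> \<xi> x \<longleftrightarrow> s \<in> simples \<Phi> \<xi> \<and> card (invs (x \<circ> s)) < card (invs x)"
proof (cases "s \<in> simples \<Phi> \<xi>")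
  case True
  then have "x \<circ> s \<in> affW \<Phi>" using affW_comp[OF assms simple_affW] by simp
  then show ?thesis using True assms by (simp add: DR_def card_invs_eq_len)
qed (simp add: DR_def)

end

section \<open>Descents along a chain of length-increasing reflections\<close>

context affine_weyl
begin

lemma DR_arefl_comp_imp_DR:
  assumes x: "x \<in> affW \<Phi>" and K: "K \<in> aroots \<Phi>"
    and len: "len \<Phi> \<xi> (arefl K \<circ> x) = len \<Phi> \<xi> x + 1"
    and desc: "s \<in> DR \<Phi> \<xi> (arefl K \<circ> x)" and ne: "arefl K \<circ> x \<noteq> x \<circ> s"
  shows "s \<in> DR \<Phi> \<xi> x"
proof -
  have Kx: "arefl K \<circ> x \<in> affW \<Phi>" using affW_comp[OF arefl_affW[OF K] x] .
  have s: "s \<in> simples \<Phi> \<xi>" and Kxs: "card (invs (arefl K \<circ> x \<circ> s)) < card (invs (arefl K \<circ> x))"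
    using desc DR_iff_card_invs[OF Kx] by auto
  have inc: "card (invs (arefl K \<circ> x)) = card (invs x) + 2"
    using len card_invs_eq_len[OF x] card_invs_eq_len[OF Kx] by simp
  then have K_notin: "K \<notin> invs x" using card_invs_arefl_le[OF x K] by fastforce
  obtain M where M: "M \<in> aroots \<Phi>" "arefl M \<circ> x = x \<circ> s"
    "invs (x \<circ> s) = (invs x - {M, aneg M}) \<union> ({M, aneg M} - invs x)"
    using invs_comp_simple[OF x s] by blast
  have xs: "x \<circ> s \<in> affW \<Phi>" using affW_comp[OF x simple_affW[OF s]] .
  show ?thesis
  proof (rule ccontr)
    assume "s \<notin> DR \<Phi> \<xi> x"
    then have "M \<notin> invs x"
      using card_invs_comp_simple[OF M(1,3)] DR_iff_card_invs[OF x] s by (auto split: if_splits)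
    then have "card (invs (x \<circ> s)) = card (invs x) + 2"
      using card_invs_comp_simple[OF M(1,3)] by simp
    then have "K \<in> invs (x \<circ> s)"
      using card_invs_arefl_ge[OF xs K] Kxs inc by (fastforce simp: comp_assoc)
    then have "K = M \<or> K = aneg M" using M(3) K_notin by blast
    then show False using M(2) ne arefl_aneg by metis
  qed
qed

lemma DR_along_reflection_chain:
  assumes chain: "\<And>t. t < n \<Longrightarrow> \<exists>K\<in>aroots \<Phi>. x (Suc t) = arefl K \<circ> x t"
    and len: "\<And>t. t < n \<Longrightarrow> len \<Phi> \<xi> (x (Suc t)) = len \<Phi> \<xi> (x t) + 1"
    and ne: "\<And>t. t < n \<Longrightarrow> x (Suc t) \<noteq> x t \<circ> s"
    and x: "\<And>t. t \<le> n \<Longrightarrow> x t \<in> affW \<Phi>"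
    and "s \<in> DR \<Phi> \<xi> (x n)" "t \<le> n"
  shows "s \<in> DR \<Phi> \<xi> (x t)"
  using \<open>t \<le> n\<close>
proof (induction t rule: inc_induct)
  case base
  show ?case by (rule \<open>s \<in> DR \<Phi> \<xi> (x n)\<close>)
next
  case (step t)
  obtain K where K: "K \<in> aroots \<Phi>" "x (Suc t) = arefl K \<circ> x t" using chain step.hyps(2) by blast
  have "t \<le> n" using step.hyps(2) by simp
  from len[OF step.hyps(2)] step.IH ne[OF step.hyps(2)]
  show ?case unfolding K(2) by (rule DR_arefl_comp_imp_DR[OF x[OF \<open>t \<le> n\<close>] K(1)])
qed

end

lemma rprod_affW:
  assumes "\<forall>t\<in>{1..n}. r t \<in> affrefls \<Phi>" "t \<le> n"
  shows "rprod r t \<in> affW \<Phi>"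
  using assms(2)
proof (induction t)
  case 0
  then show ?case using affW.id_in by (simp add: id_def)
next
  case (Suc t)
  then have "r (Suc t) \<in> affrefls \<Phi>" "rprod r t \<in> affW \<Phi>" using assms(1) by auto
  then show ?case unfolding rprod.simps by (rule affW.step)
qed

theorem proposition4p7:
  fixes \<Phi> :: "'a::euclidean_space set" and \<xi> :: 'a
    and w si sj :: "'a \<Rightarrow> 'a" and r :: "nat \<Rightarrow> 'a \<Rightarrow> 'a"
    and \<alpha> :: 'a and c :: int and n :: nat
  assumes "root_system \<Phi>" and "regular \<Phi> \<xi>"
    and "w \<in> affW \<Phi>" and "si \<in> DR \<Phi> \<xi> w"
    and "\<alpha> \<in> \<Phi>"
    and "\<forall>t\<in>{1..n}. r t \<in> affrefls \<Phi> \<and> fixH (r t) = hyp \<alpha> (of_int c + of_nat t)"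
    and "\<forall>t\<in>{1..n}. len \<Phi> \<xi> (rprod r t \<circ> w \<circ> si) = len \<Phi> \<xi> (rprod r (t - 1) \<circ> w \<circ> si) + 1"
    and "sj \<in> DR \<Phi> \<xi> (rprod r n \<circ> w \<circ> si)"
    and "\<forall>t\<in>{1..n}. rprod r t \<circ> w \<circ> si \<noteq> rprod r (t - 1) \<circ> w \<circ> si \<circ> sj"
  shows "\<forall>t\<in>{1..n}. sj \<in> DR \<Phi> \<xi> (rprod r t \<circ> w \<circ> si)"
proof -
  interpret affine_weyl \<Phi> \<xi> using assms(1,2) by unfold_locales
  define x where "x t = rprod r t \<circ> w \<circ> si" for t
  have refls: "\<forall>t\<in>{1..n}. r t \<in> affrefls \<Phi>" using assms(6) by blast
  have si: "si \<in> affW \<Phi>" using assms(4) simple_affW by (simp add: DR_def)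
  have "sj \<in> DR \<Phi> \<xi> (x t)" if "t \<le> n" for t
  proof (rule DR_along_reflection_chain[OF _ _ _ _ _ that])
    fix t assume "t < n"
    then have "Suc t \<in> {1..n}" by simp
    then obtain K where "K \<in> aroots \<Phi>" "r (Suc t) = arefl K" using refls affrefls_eq by blast
    then show "\<exists>K\<in>aroots \<Phi>. x (Suc t) = arefl K \<circ> x t" by (auto simp: x_def comp_assoc)
    show "len \<Phi> \<xi> (x (Suc t)) = len \<Phi> \<xi> (x t) + 1" "x (Suc t) \<noteq> x t \<circ> sj"
      using bspec[OF assms(7) \<open>Suc t \<in> {1..n}\<close>] bspec[OF assms(9) \<open>Suc t \<in> {1..n}\<close>]
      unfolding x_def by simp_all
  next
    show "x t \<in> affW \<Phi>" if "t \<le> n" for t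
      unfolding x_def using rprod_affW[OF refls that] assms(3) si by (intro affW_comp)
    show "sj \<in> DR \<Phi> \<xi> (x n)" unfolding x_def by (rule assms(8))
  qed
  then show ?thesis by (simp add: x_def)
qed

end
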